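(* Let $G$ be a finitely generated group with $\nabla G>0$, and let $A,B$ be finitely generated subgroups of infinite proindex in $G$. Then there exist finite index subgroups $A_0\le A$ and $B_0\le B$ such that $\langle A_0\cup B_0\rangle$ has infinite index in $G$.
   Context: For a group $U$, $d(U)$ denotes the minimal cardinality of a generating set of $U$. The rank gradient of a finitely generated group $G$ is $\nabla G=\inf_U \frac{d(U)-1}{[G:U]}$, where $U$ ranges over all finite index subgroups of $G$. The proindex of a subgroup $H$ in $G$ is the supremum of the indices $[G:U]$ over finite index subgroups $U$ of $G$ containing $H$. *)

theory Defs
  imports "HOL-Algebra.Algebra" "HOL-Library.Extended_Nat"
begin

definition fin_gen :: "('a, 'b) monoid_scheme \<Rightarrow> 'a set \<Rightarrow> bool" where
  "fin_gen G H \<longleftrightarrow> (\<exists>S. finite S \<and> S \<subseteq> H \<and> generate G S = H)"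

definition min_gens :: "('a, 'b) monoid_scheme \<Rightarrow> 'a set \<Rightarrow> nat" where
  "min_gens G H = (LEAST n. \<exists>S. finite S \<and> card S = n \<and> S \<subseteq> H \<and> generate G S = H)"

definition finite_index :: "('a, 'b) monoid_scheme \<Rightarrow> 'a set \<Rightarrow> bool" where
  "finite_index G U \<longleftrightarrow> subgroup U G \<and> finite (rcosets\<^bsub>G\<^esub> U)"

definition group_index :: "('a, 'b) monoid_scheme \<Rightarrow> 'a set \<Rightarrow> nat" where
  "group_index G U = card (rcosets\<^bsub>G\<^esub> U)"

definition rank_gradient :: "('a, 'b) monoid_scheme \<Rightarrow> real" where
  "rank_gradient G = (INF U \<in> {U. finite_index G U}.
      (real (min_gens G U) - 1) / real (group_index G U))"

definition proindex :: "('a, 'b) monoid_scheme \<Rightarrow> 'a set \<Rightarrow> enat" where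
  "proindex G H = (SUP U \<in> {U. finite_index G U \<and> H \<subseteq> U}. enat (group_index G U))"

end

theory Submission
  imports Defs
begin

text \<open>Choose \<open>N\<close> with \<open>N \<cdot> \<nabla>G > d(A) + d(B)\<close>. Infinite proindex yields finite index subgroups
  \<open>U \<supseteq> A\<close> and \<open>V \<supseteq> B\<close> of index greater than \<open>N\<close>; put \<open>A\<^sub>0 = A \<inter> V\<close> and \<open>B\<^sub>0 = B \<inter> U\<close>.
  If \<open>H = \<langle>A\<^sub>0 \<union> B\<^sub>0\<rangle>\<close> had finite index, then \<open>H \<le> U \<inter> V\<close> gives
  \<open>[G:H] \<ge> [G:U][A:A\<^sub>0] \<ge> N [A:A\<^sub>0]\<close>, and likewise for \<open>B\<^sub>0\<close>, while Schreier's bound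
  \<open>d(A\<^sub>0) \<le> d(A) [A:A\<^sub>0]\<close> gives \<open>d(H) \<le> d(A)[A:A\<^sub>0] + d(B)[B:B\<^sub>0] \<le> (d(A) + d(B)) [G:H] / N\<close>,
  which is less than \<open>\<nabla>G [G:H]\<close>: a contradiction with the definition of \<open>\<nabla>G\<close>.\<close>

lemma rcosets_carrier_update: "rcosets\<^bsub>G\<lparr>carrier := A\<rparr>\<^esub> H = (\<lambda>a. H #>\<^bsub>G\<^esub> a) ` A"
  unfolding RCOSETS_def by auto

subsection \<open>Cosets and indices\<close>

context group
begin

lemma rcos_eq_iff:
  assumes "subgroup H G" "x \<in> carrier G" "y \<in> carrier G"
  shows "H #> x = H #> y \<longleftrightarrow> x \<otimes> inv y \<in> H"
  using assms repr_independence repr_independenceD subgroup.rcos_module[OF assms(1) is_group]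
  by metis

lemma rcos_mult_eq:
  assumes "subgroup H G" "x \<in> carrier G" "y \<in> carrier G" "z \<in> carrier G"
    and "H #> x = H #> y"
  shows "H #> (x \<otimes> z) = H #> (y \<otimes> z)"
  using assms coset_mult_assoc[OF subgroup.subset[OF assms(1)]] by metis

lemma finite_card_rcosets_mono:
  assumes H: "subgroup H G" and K: "subgroup K G" and "H \<subseteq> K" and fin: "finite (rcosets H)"
  shows "finite (rcosets K) \<and> card (rcosets K) \<le> card (rcosets H)"
proof -
  define f where "f C = K #> (SOME x. x \<in> C)" for C
  have "f (H #> x) = K #> x" if x: "x \<in> carrier G" for x
  proof -
    have "(SOME y. y \<in> H #> x) \<in> H #> x"
      using rcos_self[OF x H] by (rule someI)
    then show ?thesis
      unfolding f_def using x \<open>H \<subseteq> K\<close> subgroup.elemrcos_carrier[OF H is_group x]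
        subgroup.rcos_module_imp[OF H is_group x] rcos_eq_iff[OF K] by blast
  qed
  then have "rcosets K = f ` (rcosets H)"
    unfolding RCOSETS_def by auto
  then show ?thesis
    using fin by (simp add: card_image_le)
qed

lemma rcos_Int_eq:
  assumes A: "subgroup A G" and V: "subgroup V G" and a: "a \<in> A"
  shows "(A \<inter> V) #> a = (V #> a) \<inter> A"
proof -
  have ac: "a \<in> carrier G" using subgroup.mem_carrier[OF A a] .
  have "x \<in> (A \<inter> V) #> a \<longleftrightarrow> x \<in> (V #> a) \<inter> A" if x: "x \<in> carrier G" for x
  proof -
    have "x \<in> A \<longleftrightarrow> x \<otimes> inv a \<in> A"
    proof
      assume "x \<otimes> inv a \<in> A"
      then have "x \<otimes> inv a \<otimes> a \<in> A" using a subgroup.m_closed[OF A] by blast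
      then show "x \<in> A" using x ac by (simp add: m_assoc)
    qed (use a subgroup.m_closed[OF A] subgroup.m_inv_closed[OF A] in blast)
    then show ?thesis
      using subgroup.rcos_module[OF _ is_group ac x] A V subgroups_Inter_pair by blast
  qed
  moreover have "(A \<inter> V) #> a \<subseteq> carrier G" "(V #> a) \<inter> A \<subseteq> carrier G"
    using r_coset_subset_G[OF _ ac] subgroup.subset[OF A] subgroup.subset[OF V] by blast+
  ultimately show ?thesis by blast
qed

lemma finite_index_Int:
  assumes A: "subgroup A G" and V: "finite_index G V"
  shows "finite_index (G\<lparr>carrier := A\<rparr>) (A \<inter> V)"
proof -
  have V: "subgroup V G" "finite (rcosets V)"
    using V unfolding finite_index_def by auto
  have "(\<lambda>a. (A \<inter> V) #> a) ` A \<subseteq> (\<lambda>C. C \<inter> A) ` (rcosets V)"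
  proof
    fix E assume "E \<in> (\<lambda>a. (A \<inter> V) #> a) ` A"
    then obtain a where a: "a \<in> A" and E: "E = (A \<inter> V) #> a" by blast
    have "V #> a \<in> rcosets V"
      using rcosetsI[OF subgroup.subset[OF V(1)] subgroup.mem_carrier[OF A a]] .
    then show "E \<in> (\<lambda>C. C \<inter> A) ` (rcosets V)"
      unfolding E rcos_Int_eq[OF A V(1) a] by (rule imageI)
  qed
  then have "finite (rcosets\<^bsub>G\<lparr>carrier := A\<rparr>\<^esub> (A \<inter> V))"
    unfolding rcosets_carrier_update by (rule finite_subset) (use V(2) in simp)
  with subgroup_incl[OF subgroups_Inter_pair[OF A V(1)] A Int_lower1] show ?thesis
    unfolding finite_index_def ..
qed

lemma rcos_Int_mult_eqD:
  assumes U: "subgroup U G" and V: "subgroup V G" and A: "subgroup A G" and "A \<subseteq> U"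
    and a: "a1 \<in> A" "a2 \<in> A" and g: "g1 \<in> carrier G" "g2 \<in> carrier G"
    and eq: "(U \<inter> V) #> (a1 \<otimes> g1) = (U \<inter> V) #> (a2 \<otimes> g2)"
  shows "U #> g1 = U #> g2" and "g1 = g2 \<Longrightarrow> (A \<inter> V) #> a1 = (A \<inter> V) #> a2"
proof -
  have ac: "a1 \<in> carrier G" "a2 \<in> carrier G"
    using a subgroup.mem_carrier[OF A] by auto
  have w: "a1 \<otimes> g1 \<otimes> inv (a2 \<otimes> g2) \<in> U \<inter> V"
    using eq rcos_eq_iff[OF subgroups_Inter_pair[OF U V]] ac g by simp
  have "inv a1 \<otimes> (a1 \<otimes> g1 \<otimes> inv (a2 \<otimes> g2)) \<otimes> a2 \<in> U"
    using a \<open>A \<subseteq> U\<close> w subgroup.m_closed[OF U]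
      subgroup.m_inv_closed[OF U, of a1] by blast
  moreover have "inv a1 \<otimes> (a1 \<otimes> g1 \<otimes> inv (a2 \<otimes> g2)) \<otimes> a2 = g1 \<otimes> inv g2"
    using ac g by (simp add: inv_mult_group m_assoc) (simp add: m_assoc [symmetric])
  ultimately show "U #> g1 = U #> g2"
    using rcos_eq_iff[OF U g] by simp
  assume "g1 = g2"
  then have "a1 \<otimes> g1 \<otimes> inv (a2 \<otimes> g2) = a1 \<otimes> inv a2"
    using ac g by (simp add: inv_mult_group m_assoc) (simp add: m_assoc [symmetric])
  then have "a1 \<otimes> inv a2 \<in> A \<inter> V"
    using w a by (auto intro: subgroup.m_closed[OF A] subgroup.m_inv_closed[OF A])
  then show "(A \<inter> V) #> a1 = (A \<inter> V) #> a2"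
    using rcos_eq_iff[OF subgroups_Inter_pair[OF A V] ac] by simp
qed

lemma group_index_Int_ge:
  assumes U: "subgroup U G" and V: "subgroup V G" and A: "subgroup A G" and "A \<subseteq> U"
    and fin: "finite (rcosets (U \<inter> V))"
  shows "group_index G U * group_index (G\<lparr>carrier := A\<rparr>) (A \<inter> V) \<le> group_index G (U \<inter> V)"
proof -
  define cosU where "cosU g = U #> g" for g
  define cosA where "cosA a = (A \<inter> V) #> a" for a
  define repU where "repU = inv_into (carrier G) cosU"
  define repA where "repA = inv_into A cosA"
  define \<phi> where "\<phi> = (\<lambda>(D, E). (U \<inter> V) #> (repA E \<otimes> repU D))"
  have RU: "rcosets U = cosU ` carrier G" and RA: "rcosets\<^bsub>G\<lparr>carrier := A\<rparr>\<^esub> (A \<inter> V) = cosA ` A"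
    unfolding cosU_def cosA_def rcosets_carrier_update by (auto simp: RCOSETS_def)
  have repU: "repU D \<in> carrier G" "cosU (repU D) = D" if "D \<in> cosU ` carrier G" for D
    using that unfolding repU_def by (simp_all add: inv_into_into f_inv_into_f)
  have repA: "repA E \<in> A" "cosA (repA E) = E" if "E \<in> cosA ` A" for E
    using that unfolding repA_def by (simp_all add: inv_into_into f_inv_into_f)
  have inj: "inj_on \<phi> (cosU ` carrier G \<times> cosA ` A)"
  proof (rule inj_onI, unfold split_paired_all)
    fix D1 E1 D2 E2
    assume "(D1, E1) \<in> cosU ` carrier G \<times> cosA ` A" "(D2, E2) \<in> cosU ` carrier G \<times> cosA ` A"
      and eq: "\<phi> (D1, E1) = \<phi> (D2, E2)"
    then have D: "D1 \<in> cosU ` carrier G" "D2 \<in> cosU ` carrier G"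
      and E: "E1 \<in> cosA ` A" "E2 \<in> cosA ` A" by auto
    note eqD = rcos_Int_mult_eqD[OF U V A \<open>A \<subseteq> U\<close> repA(1)[OF E(1)] repA(1)[OF E(2)]
        repU(1)[OF D(1)] repU(1)[OF D(2)]]
    have "D1 = D2"
      using eqD(1) eq repU(2)[OF D(1)] repU(2)[OF D(2)] unfolding \<phi>_def cosU_def by simp
    moreover have "E1 = E2"
      using eqD(2) eq \<open>D1 = D2\<close> repA(2)[OF E(1)] repA(2)[OF E(2)] unfolding \<phi>_def cosA_def by simp
    ultimately show "(D1, E1) = (D2, E2)" by simp
  qed
  have "\<phi> (D, E) \<in> rcosets (U \<inter> V)" if "D \<in> cosU ` carrier G" "E \<in> cosA ` A" for D E
    unfolding \<phi>_def using that repU(1) repA(1) subgroup.mem_carrier[OF A]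
      rcosetsI[OF subgroup.subset[OF subgroups_Inter_pair[OF U V]]] by simp
  then have "\<phi> ` (cosU ` carrier G \<times> cosA ` A) \<subseteq> rcosets (U \<inter> V)"
    by blast
  then have "card (cosU ` carrier G \<times> cosA ` A) \<le> card (rcosets (U \<inter> V))"
    using card_inj_on_le[OF inj] fin by blast
  then show ?thesis
    unfolding group_index_def RU RA by (simp add: card_cartesian_product)
qed

lemma group_index_pos: "finite_index G H \<Longrightarrow> 0 < group_index G H"
  unfolding finite_index_def group_index_def
  using rcosetsI[OF subgroup.subset one_closed] card_gt_0_iff by blast

lemma group_index_Int_le:
  assumes U: "subgroup U G" and V: "subgroup V G" and A: "subgroup A G" "A \<subseteq> U"
    and H: "finite_index G H" "H \<subseteq> U \<inter> V"
  shows "group_index G U * group_index (G\<lparr>carrier := A\<rparr>) (A \<inter> V) \<le> group_index G H"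
proof -
  have "finite (rcosets (U \<inter> V)) \<and> card (rcosets (U \<inter> V)) \<le> card (rcosets H)"
    using H subgroups_Inter_pair[OF U V] finite_card_rcosets_mono unfolding finite_index_def by blast
  then show ?thesis
    using group_index_Int_ge[OF U V A] unfolding group_index_def by (meson order_trans)
qed

end

subsection \<open>Schreier's bound on the number of generators\<close>

locale schreier_transversal = group +
  fixes A H S :: "'a set" and rep :: "'a set \<Rightarrow> 'a"
  assumes generators: "S \<subseteq> carrier G" "generate G S = A"
    and subgroup_H: "subgroup H G" and H_subset: "H \<subseteq> A"
    and rep_mem: "a \<in> A \<Longrightarrow> rep (H #> a) \<in> H #> a"
    and rep_H: "rep H = \<one>"
begin

lemma subgroup_A: "subgroup A G"
  using generate_is_subgroup generators by blast

lemma A_carrier: "a \<in> A \<Longrightarrow> a \<in> carrier G"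
  using subgroup.mem_carrier[OF subgroup_A] .

lemma S_subset: "S \<subseteq> A"
  using generate.incl[of _ S G] generators(2) by blast

definition rep_of :: "'a \<Rightarrow> 'a" where
  "rep_of x = rep (H #> x)"

definition transversal :: "'a set" where
  "transversal = rep_of ` A"

lemma rep_of_coset: "a \<in> A \<Longrightarrow> H #> rep_of a = H #> a"
  unfolding rep_of_def using repr_independence[OF rep_mem A_carrier subgroup_H] by (rule sym)

lemma rep_of_in_A: "a \<in> A \<Longrightarrow> rep_of a \<in> A"
proof -
  assume a: "a \<in> A"
  obtain h where "h \<in> H" "rep_of a = h \<otimes> a"
    using rep_mem[OF a] unfolding rep_of_def r_coset_def by blast
  then show "rep_of a \<in> A"
    using a H_subset subgroup.m_closed[OF subgroup_A] by auto
qed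

lemma rep_of_carrier: "a \<in> A \<Longrightarrow> rep_of a \<in> carrier G"
  using A_carrier rep_of_in_A by blast

lemma mult_inv_rep_of: "a \<in> A \<Longrightarrow> a \<otimes> inv (rep_of a) \<in> H"
  using rcos_eq_iff[OF subgroup_H A_carrier rep_of_carrier, of a a] rep_of_coset[of a] by argo

lemma rep_of_mult_rep_of:
  assumes "a \<in> A" "g \<in> A"
  shows "rep_of (rep_of a \<otimes> g) = rep_of (a \<otimes> g)"
  unfolding rep_of_def[of "rep_of a \<otimes> g"] rep_of_def[of "a \<otimes> g"]
  using rcos_mult_eq[OF subgroup_H rep_of_carrier A_carrier A_carrier rep_of_coset] assms
  by simp

lemma transversal_subset: "transversal \<subseteq> A"
  unfolding transversal_def using rep_of_in_A by blast

lemma rep_of_transversal: "t \<in> transversal \<Longrightarrow> rep_of t = t"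
  unfolding transversal_def using rep_of_coset by (auto simp: rep_of_def[of "rep_of _"] rep_of_def)

lemma rep_of_eq_one: "h \<in> H \<Longrightarrow> rep_of h = \<one>"
  unfolding rep_of_def using subgroup.rcos_const[OF subgroup_H is_group] rep_H by simp

lemma one_in_transversal: "\<one> \<in> transversal"
  unfolding transversal_def
  using rep_of_eq_one[OF subgroup.one_closed[OF subgroup_H]] subgroup.one_closed[OF subgroup_A]
  by (metis imageI)

definition schreier_elem :: "'a \<Rightarrow> 'a \<Rightarrow> 'a" where
  "schreier_elem t g = t \<otimes> g \<otimes> inv (rep_of (t \<otimes> g))"

definition schreier_gens :: "'a set" where
  "schreier_gens = (\<lambda>(t, s). schreier_elem t s) ` (transversal \<times> S)"

lemma schreier_elem_in_H: "t \<in> A \<Longrightarrow> g \<in> A \<Longrightarrow> schreier_elem t g \<in> H"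
  unfolding schreier_elem_def using mult_inv_rep_of subgroup.m_closed[OF subgroup_A] by blast

lemma schreier_elem_mult:
  assumes t: "t \<in> A" and g: "g1 \<in> A" "g2 \<in> A"
  shows "schreier_elem t (g1 \<otimes> g2) = schreier_elem t g1 \<otimes> schreier_elem (rep_of (t \<otimes> g1)) g2"
proof -
  define r where "r = rep_of (t \<otimes> g1)"
  have tg1: "t \<otimes> g1 \<in> A" using t g subgroup.m_closed[OF subgroup_A] by blast
  have rc: "r \<in> carrier G" unfolding r_def using rep_of_carrier[OF tg1] .
  have "rep_of (r \<otimes> g2) = rep_of (t \<otimes> (g1 \<otimes> g2))"
    unfolding r_def using rep_of_mult_rep_of[OF tg1 g(2)] t g A_carrier by (simp add: m_assoc)
  moreover have "rep_of (r \<otimes> g2) \<in> carrier G"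
    using rep_of_carrier subgroup.m_closed[OF subgroup_A] rep_of_in_A[OF tg1] g(2) unfolding r_def
    by blast
  ultimately show ?thesis
    unfolding schreier_elem_def r_def[symmetric] using t g rc A_carrier
    by (simp add: m_assoc) (simp add: m_assoc [symmetric])
qed

lemma schreier_elem_inv:
  assumes t: "t \<in> transversal" and s: "s \<in> A"
  shows "schreier_elem t (inv s) = inv (schreier_elem (rep_of (t \<otimes> inv s)) s)"
proof -
  define u where "u = rep_of (t \<otimes> inv s)"
  have tA: "t \<in> A" using t transversal_subset by blast
  have tsA: "t \<otimes> inv s \<in> A"
    using tA s subgroup.m_closed[OF subgroup_A] subgroup.m_inv_closed[OF subgroup_A] by blast
  have uc: "u \<in> carrier G" unfolding u_def using rep_of_carrier[OF tsA] .
  have "rep_of (u \<otimes> s) = rep_of (t \<otimes> inv s \<otimes> s)"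
    unfolding u_def using rep_of_mult_rep_of[OF tsA s] .
  also have "\<dots> = t"
    using rep_of_transversal[OF t] A_carrier[OF tA] A_carrier[OF s] by (simp add: m_assoc)
  finally show ?thesis
    unfolding schreier_elem_def u_def[symmetric] using uc A_carrier[OF tA] A_carrier[OF s]
    by (simp add: inv_mult_group m_assoc)
qed

lemma schreier_gens_subset: "schreier_gens \<subseteq> H"
  unfolding schreier_gens_def using schreier_elem_in_H transversal_subset S_subset by auto

lemma schreier_elem_in_generate:
  assumes "g \<in> A" and "t \<in> transversal"
  shows "schreier_elem t g \<in> generate G schreier_gens"
  using assms(1)[folded generators(2)] assms(2)
proof (induction g arbitrary: t rule: generate.induct)
  case one
  then have "t \<in> carrier G"
    using transversal_subset A_carrier by blast
  then show ?case
    using rep_of_transversal[OF one] by (simp add: schreier_elem_def generate.one)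
next
  case (incl s)
  then show ?case
    unfolding schreier_gens_def by (auto intro: generate.incl)
next
  case (inv s)
  have "rep_of (t \<otimes> inv s) \<in> transversal"
    using inv transversal_subset generators generate.incl[of s S G]
      subgroup.m_closed[OF subgroup_A] subgroup.m_inv_closed[OF subgroup_A]
    unfolding transversal_def by blast
  then have "schreier_elem (rep_of (t \<otimes> inv s)) s \<in> generate G schreier_gens"
    using inv unfolding schreier_gens_def by (auto intro: generate.incl)
  moreover have "schreier_gens \<subseteq> carrier G"
    using schreier_gens_subset subgroup.subset[OF subgroup_H] by blast
  ultimately show ?case
    using generate_m_inv_closed schreier_elem_inv[OF inv(2)] inv(1) generators
      generate.incl[of s S G] by simp
next
  case (eng g1 g2)
  have g: "g1 \<in> A" "g2 \<in> A" and t: "t \<in> A"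
    using eng(1,2,5) transversal_subset unfolding generators(2) by auto
  then have "rep_of (t \<otimes> g1) \<in> transversal"
    using subgroup.m_closed[OF subgroup_A] unfolding transversal_def by blast
  then have "schreier_elem (rep_of (t \<otimes> g1)) g2 \<in> generate G schreier_gens"
    by (rule eng.IH(2))
  with eng.IH(1)[OF eng.prems] show ?case
    unfolding schreier_elem_mult[OF t g] by (rule generate.eng)
qed

lemma generate_schreier_gens: "generate G schreier_gens = H"
proof
  show "generate G schreier_gens \<subseteq> H"
    using generate_subgroup_incl[OF schreier_gens_subset subgroup_H] .
  show "H \<subseteq> generate G schreier_gens"
  proof
    fix h assume h: "h \<in> H"
    then have "schreier_elem \<one> h = h"
      using rep_of_eq_one subgroup.mem_carrier[OF subgroup_H] by (simp add: schreier_elem_def)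
    moreover have "schreier_elem \<one> h \<in> generate G schreier_gens"
      using schreier_elem_in_generate[OF _ one_in_transversal] h H_subset by blast
    ultimately show "h \<in> generate G schreier_gens" by simp
  qed
qed

lemma card_schreier_gens:
  assumes "finite S" and "finite ((\<lambda>a. H #> a) ` A)"
  shows "finite schreier_gens \<and> card schreier_gens \<le> card S * card ((\<lambda>a. H #> a) ` A)"
proof -
  have "transversal = rep ` (\<lambda>a. H #> a) ` A"
    unfolding transversal_def rep_of_def by auto
  then have "finite transversal" and card_T: "card transversal \<le> card ((\<lambda>a. H #> a) ` A)"
    using assms(2) card_image_le by auto
  have "card schreier_gens \<le> card (transversal \<times> S)"
    unfolding schreier_gens_def using assms(1) \<open>finite transversal\<close> by (intro card_image_le) simp
  also have "\<dots> \<le> card S * card ((\<lambda>a. H #> a) ` A)"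
    using card_T by (simp add: card_cartesian_product)
  finally show ?thesis
    unfolding schreier_gens_def using assms(1) \<open>finite transversal\<close> by simp
qed

end

lemma min_gens_le:
  "finite S \<Longrightarrow> S \<subseteq> H \<Longrightarrow> generate G S = H \<Longrightarrow> min_gens G H \<le> card S"
  unfolding min_gens_def by (rule Least_le) blast

lemma min_gens_obtain:
  assumes "fin_gen G H"
  obtains S where "finite S" "card S = min_gens G H" "S \<subseteq> H" "generate G S = H"
proof -
  have "\<exists>S. finite S \<and> card S = min_gens G H \<and> S \<subseteq> H \<and> generate G S = H"
    unfolding min_gens_def by (rule LeastI_ex) (use assms in \<open>auto simp: fin_gen_def\<close>)
  then show ?thesis using that by blast
qed

context group
begin

lemma schreier_min_gens_le:
  assumes A: "subgroup A G" "fin_gen G A" and H: "subgroup H G" "H \<subseteq> A"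
    and fin: "finite (rcosets\<^bsub>G\<lparr>carrier := A\<rparr>\<^esub> H)"
  shows "fin_gen G H \<and> min_gens G H \<le> min_gens G A * group_index (G\<lparr>carrier := A\<rparr>) H"
proof -
  obtain S where S: "finite S" "card S = min_gens G A" "S \<subseteq> A" "generate G S = A"
    using min_gens_obtain[OF A(2)] .
  define rep where "rep C = (if C = H then \<one> else (SOME x. x \<in> C))" for C
  have "rep (H #> a) \<in> H #> a" if "a \<in> A" for a
    using rcos_self[OF subgroup.mem_carrier[OF A(1) that] H(1)] subgroup.one_closed[OF H(1)]
    unfolding rep_def by (auto intro: someI)
  then interpret schreier_transversal G A H S rep
    using S subgroup.subset[OF A(1)] H
    by (intro schreier_transversal.intro is_group schreier_transversal_axioms.intro)
      (auto simp: rep_def)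
  have "finite schreier_gens" "card schreier_gens \<le> card S * group_index (G\<lparr>carrier := A\<rparr>) H"
    using card_schreier_gens[OF S(1)] fin unfolding group_index_def rcosets_carrier_update
    by simp_all
  then show ?thesis
    using min_gens_le[OF _ schreier_gens_subset generate_schreier_gens] schreier_gens_subset
      generate_schreier_gens S(2)
    unfolding fin_gen_def by auto
qed

lemma generate_Un_generate:
  assumes "S \<subseteq> carrier G" "T \<subseteq> carrier G"
  shows "generate G (generate G S \<union> generate G T) = generate G (S \<union> T)"
proof
  have "generate G S \<union> generate G T \<subseteq> generate G (S \<union> T)"
    using mono_generate[of S "S \<union> T"] mono_generate[of T "S \<union> T"] by blast
  then show "generate G (generate G S \<union> generate G T) \<subseteq> generate G (S \<union> T)"
    using generate_subgroup_incl generate_is_subgroup[of "S \<union> T"] assms by blast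
  have "S \<union> T \<subseteq> generate G S \<union> generate G T"
    using generate.incl[of _ S G] generate.incl[of _ T G] by blast
  then show "generate G (S \<union> T) \<subseteq> generate G (generate G S \<union> generate G T)"
    by (rule mono_generate)
qed

lemma min_gens_generate_Un:
  assumes H: "subgroup H G" "fin_gen G H" and K: "subgroup K G" "fin_gen G K"
  shows "min_gens G (generate G (H \<union> K)) \<le> min_gens G H + min_gens G K"
proof -
  obtain S where S: "finite S" "card S = min_gens G H" "S \<subseteq> H" "generate G S = H"
    using min_gens_obtain[OF H(2)] .
  obtain T where T: "finite T" "card T = min_gens G K" "T \<subseteq> K" "generate G T = K"
    using min_gens_obtain[OF K(2)] .
  have "S \<union> T \<subseteq> carrier G"
    using S(3) T(3) subgroup.subset[OF H(1)] subgroup.subset[OF K(1)] by blast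
  then have "generate G (S \<union> T) = generate G (H \<union> K)"
    using generate_Un_generate[of S T] unfolding S(4) T(4) by simp
  moreover have "S \<union> T \<subseteq> generate G (H \<union> K)"
    using S(3) T(3) generate.incl[of _ "H \<union> K" G] by blast
  ultimately have "min_gens G (generate G (H \<union> K)) \<le> card (S \<union> T)"
    by (intro min_gens_le finite_UnI S(1) T(1))
  also have "\<dots> \<le> min_gens G H + min_gens G K"
    using card_Un_le[of S T] S(2) T(2) by simp
  finally show ?thesis .
qed

lemma min_gens_generate_Un_le:
  assumes A: "subgroup A G" "fin_gen G A" and A0: "subgroup A0 G" "A0 \<subseteq> A"
      "finite_index (G\<lparr>carrier := A\<rparr>) A0"
    and B: "subgroup B G" "fin_gen G B" and B0: "subgroup B0 G" "B0 \<subseteq> B"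
      "finite_index (G\<lparr>carrier := B\<rparr>) B0"
  shows "min_gens G (generate G (A0 \<union> B0))
    \<le> min_gens G A * group_index (G\<lparr>carrier := A\<rparr>) A0 + min_gens G B * group_index (G\<lparr>carrier := B\<rparr>) B0"
proof -
  have "fin_gen G A0 \<and> min_gens G A0 \<le> min_gens G A * group_index (G\<lparr>carrier := A\<rparr>) A0"
    using schreier_min_gens_le[OF A A0(1,2)] A0(3) unfolding finite_index_def by blast
  moreover have "fin_gen G B0 \<and> min_gens G B0 \<le> min_gens G B * group_index (G\<lparr>carrier := B\<rparr>) B0"
    using schreier_min_gens_le[OF B B0(1,2)] B0(3) unfolding finite_index_def by blast
  ultimately show ?thesis
    using min_gens_generate_Un[OF A0(1) _ B0(1)] by fastforce
qed

end

subsection \<open>Rank gradient and proindex\<close>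

lemma rank_gradient_le:
  assumes "finite_index G U"
  shows "rank_gradient G \<le> (real (min_gens G U) - 1) / real (group_index G U)"
proof -
  have "- 1 \<le> (real (min_gens G U') - 1) / real (group_index G U')" for U'
    by (cases "group_index G U' = 0") (simp_all add: le_divide_eq)
  then show ?thesis
    unfolding rank_gradient_def using assms by (intro cINF_lower bdd_belowI2) auto
qed

lemma proindex_infinite_obtain:
  assumes "proindex G H = \<infinity>"
  obtains U where "finite_index G U" "H \<subseteq> U" "n < group_index G U"
proof -
  have "enat n < proindex G H" using assms by simp
  then obtain U where "finite_index G U" "H \<subseteq> U" "n < group_index G U"
    unfolding proindex_def less_SUP_iff by auto
  then show ?thesis using that by blast
qed

lemma divide_lt_of_index_bounds:
  fixes r :: real and a b j k m N d :: nat
  assumes N: "real (a + b) < real N * r" and j: "N * j \<le> m" and k: "N * k \<le> m"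
    and d: "d \<le> a * j + b * k" and m: "0 < m"
  shows "(real d - 1) / real m < r"
proof -
  have "0 < N" using N by (cases N) auto
  have "N * d \<le> a * (N * j) + b * (N * k)"
    using mult_le_mono2[OF d, of N] by (simp add: algebra_simps)
  also have "\<dots> \<le> (a + b) * m"
    using j k by (simp add: add_mult_distrib add_mono)
  finally have "real N * real d \<le> real (a + b) * real m"
    by (metis of_nat_le_iff of_nat_mult)
  also have "\<dots> < real N * r * real m"
    using N m by simp
  finally have "real d < r * real m"
    using \<open>0 < N\<close> by (simp add: mult.assoc)
  then show ?thesis
    using m by (simp add: divide_less_eq)
qed

context group
begin

lemma infinite_index_generate_Int_Un:
  assumes N: "real (min_gens G A + min_gens G B) < real N * rank_gradient G"
    and A: "subgroup A G" "fin_gen G A" and B: "subgroup B G" "fin_gen G B"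
    and U: "finite_index G U" "A \<subseteq> U" "N < group_index G U"
    and V: "finite_index G V" "B \<subseteq> V" "N < group_index G V"
  shows "infinite (rcosets (generate G ((A \<inter> V) \<union> (B \<inter> U))))"
proof
  define H where "H = generate G ((A \<inter> V) \<union> (B \<inter> U))"
  have UV: "subgroup U G" "subgroup V G"
    using U(1) V(1) unfolding finite_index_def by auto
  assume "finite (rcosets (generate G ((A \<inter> V) \<union> (B \<inter> U))))"
  moreover have "subgroup H G"
    unfolding H_def using subgroup.subset[OF A(1)] subgroup.subset[OF B(1)]
    by (intro generate_is_subgroup) blast
  ultimately have H: "finite_index G H"
    unfolding finite_index_def H_def by blast
  have "H \<subseteq> U \<inter> V"
    unfolding H_def using U(2) V(2) by (intro generate_subgroup_incl subgroups_Inter_pair UV) blast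
  then have "N * group_index (G\<lparr>carrier := A\<rparr>) (A \<inter> V) \<le> group_index G H"
    and "N * group_index (G\<lparr>carrier := B\<rparr>) (B \<inter> U) \<le> group_index G H"
    using le_trans[OF mult_le_mono1[OF less_imp_le[OF U(3)]] group_index_Int_le[OF UV A(1) U(2) H]]
      le_trans[OF mult_le_mono1[OF less_imp_le[OF V(3)]] group_index_Int_le[OF UV(2,1) B(1) V(2) H]]
    by (simp_all add: Int_commute)
  moreover have "min_gens G H \<le> min_gens G A * group_index (G\<lparr>carrier := A\<rparr>) (A \<inter> V)
      + min_gens G B * group_index (G\<lparr>carrier := B\<rparr>) (B \<inter> U)"
    unfolding H_def using A B UV finite_index_Int[OF A(1) V(1)] finite_index_Int[OF B(1) U(1)]
    by (intro min_gens_generate_Un_le subgroups_Inter_pair) auto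
  ultimately have "(real (min_gens G H) - 1) / real (group_index G H) < rank_gradient G"
    using divide_lt_of_index_bounds[OF N] group_index_pos[OF H] by blast
  with rank_gradient_le[OF H] show False by linarith
qed

end

theorem lemma3p1:
  fixes G :: "('a, 'b) monoid_scheme" and A B :: "'a set"
  assumes "group G"
    and "fin_gen G (carrier G)"
    and "rank_gradient G > 0"
    and "subgroup A G" and "fin_gen G A" and "proindex G A = \<infinity>"
    and "subgroup B G" and "fin_gen G B" and "proindex G B = \<infinity>"
  shows "\<exists>A0 B0. A0 \<subseteq> A \<and> B0 \<subseteq> B
           \<and> finite_index (G\<lparr>carrier := A\<rparr>) A0
           \<and> finite_index (G\<lparr>carrier := B\<rparr>) B0
           \<and> infinite (rcosets\<^bsub>G\<^esub> (generate G (A0 \<union> B0)))"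
proof -
  interpret group G by fact
  obtain N :: nat where N: "real (min_gens G A + min_gens G B) < real N * rank_gradient G"
    using ex_less_of_nat_mult[OF assms(3)] by blast
  obtain U where U: "finite_index G U" "A \<subseteq> U" "N < group_index G U"
    using proindex_infinite_obtain[OF assms(6)] .
  obtain V where V: "finite_index G V" "B \<subseteq> V" "N < group_index G V"
    using proindex_infinite_obtain[OF assms(9)] .
  show ?thesis
    using finite_index_Int[OF assms(4) V(1)] finite_index_Int[OF assms(7) U(1)]
      infinite_index_generate_Int_Un[OF N assms(4,5,7,8) U V]
    by (intro exI[of _ "A \<inter> V"] exI[of _ "B \<inter> U"]) auto
qed

end
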